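(* Let $q\in\mathbb{C}$ with $0<|q|<1$ and $l,m,n,u,v\in\mathbb{N}$. Then \[ \frac{1}{(q)_{l+m}(q)_{l+n}(q)_u(q)_v} \sum_{k=0}^\infty\frac{q^{k^2} (q)_{l+m+n-k}(q)_{u+v+k}} {(q)_k (q)_{l-k}(q)_{m-k}(q)_{n-k} (q)_{u+k}(q)_{v+k}} =\frac{1}{(q)_{l+u}(q)_{l+v}(q)_m(q)_n} \sum_{k=0}^\infty\frac{q^{k^2} (q)_{l+u+v-k}(q)_{m+n+k}} {(q)_k (q)_{l-k}(q)_{u-k}(q)_{v-k} (q)_{m+k}(q)_{n+k}}, \] and \[ \frac{1}{(q)_{l+m+1}(q)_{l+n+1}(q)_u(q)_v} \sum_{k=0}^\infty\frac{q^{k^2+k} (q)_{l+m+n-k+1}(q)_{u+v+k+1}} {(q)_k (q)_{l-k}(q)_{m-k}(q)_{n-k} (q)_{u+k+1}(q)_{v+k+1}} =\frac{1}{(q)_{l+u+1}(q)_{l+v+1}(q)_m(q)_n} \sum_{k=0}^\infty\frac{q^{k^2+k} (q)_{l+u+v-k+1}(q)_{m+n+k+1}} {(q)_k (q)_{l-k}(q)_{u-k}(q)_{v-k} (q)_{m+k+1}(q)_{n+k+1}}. \]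
   Context: $(q)_n=(q;q)_n=(1-q)(1-q^2)\cdots(1-q^n)$ for $n\ge0$ (with $(q)_0=1$), and $1/(q)_n=0$ for $n<0$. *)

theory Defs
  imports "HOL-Analysis.Analysis"
begin

definition qpoch :: "complex \<Rightarrow> nat \<Rightarrow> complex" where
  "qpoch q n = (\<Prod>i=1..n. 1 - q ^ i)"

text \<open>(q;q)_n on an integer index, with value for negative n irrelevant
 (only used in numerators where the term vanishes anyway); we set it to 1.\<close>
definition qp :: "complex \<Rightarrow> int \<Rightarrow> complex" where
  "qp q n = (if n < 0 then 1 else qpoch q (nat n))"

definition qp_inv :: "complex \<Rightarrow> int \<Rightarrow> complex" where
  "qp_inv q n = (if n < 0 then 0 else 1 / qpoch q (nat n))"

end

theory Submission
  imports Defs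
begin

(* Both identities state that one series (qseries, with shift s = 0 or 1) is invariant under
   (m, n) <-> (u, v).  Each term of the series is expanded by the q-Pfaff-Saalschuetz summation
   q_saalschuetz, taken with p = l - k and r = s + k.  The resulting double sum over (k, j) has
   a summand that is symmetric under (k, m, n) <-> (j, u, v), so exchanging the order of
   summation proves the symmetry.  The summation formula is proved by induction on v with a WZ
   certificate: up to a difference in j that telescopes, the summand satisfies a first-order
   recurrence in v. *)

lemma qpoch_0 [simp]: "qpoch q 0 = 1"
  by (simp add: qpoch_def)

lemma qpoch_Suc: "qpoch q (Suc n) = qpoch q n * (1 - q ^ Suc n)"
  by (simp add: qpoch_def prod.nat_ivl_Suc' mult.commute)

lemma power_neq_one:
  fixes q :: "'a::real_normed_div_algebra"
  assumes "norm q < 1" and "0 < k"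
  shows "q ^ k \<noteq> 1"
proof
  assume "q ^ k = 1"
  then have "norm (q ^ k) = 1" by simp
  moreover have "norm (q ^ k) < 1"
    using assms by (simp add: norm_power power_less_one_iff)
  ultimately show False by simp
qed

lemma qpoch_nonzero: "norm q < 1 \<Longrightarrow> qpoch q n \<noteq> 0"
  by (simp add: qpoch_def power_neq_one)

lemma qp_of_nat [simp]: "qp q (int n) = qpoch q n"
  by (simp add: qp_def)

lemma qp_inv_of_nat [simp]: "qp_inv q (int n) = 1 / qpoch q n"
  by (simp add: qp_inv_def)

lemma qp_inv_neg: "n < 0 \<Longrightarrow> qp_inv q n = 0"
  by (simp add: qp_inv_def)

lemma qp_inv_pred:
  assumes "norm q < 1"
  shows "qp_inv q (int n - 1) = (1 - q ^ n) * qp_inv q (int n)"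
proof (cases n)
  case 0
  then show ?thesis by (simp add: qp_inv_neg)
next
  case (Suc k)
  then have "int n - 1 = int k" by simp
  moreover have "qp_inv q (int n) = 1 / (qpoch q k * (1 - q ^ n))"
    unfolding Suc qp_inv_of_nat qpoch_Suc ..
  ultimately show ?thesis
    using qpoch_nonzero[OF assms, of k] power_neq_one[OF assms, of n] Suc
    by (simp add: field_simps)
qed

lemma power_mult_qp_inv_pred:
  assumes "norm q < 1"
  shows "q ^ j * qp_inv q (int p - int (Suc j)) = (q ^ j - q ^ p) * qp_inv q (int p - int j)"
proof (cases "j \<le> p")
  case True
  then have idx: "int p - int (Suc j) = int (p - j) - 1" "int p - int j = int (p - j)"
    by simp_all
  have pow: "q ^ j * (1 - q ^ (p - j)) = q ^ j - q ^ p"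
    using True by (simp add: right_diff_distrib flip: power_add)
  show ?thesis
    unfolding idx qp_inv_pred[OF assms] mult.assoc[symmetric] pow ..
next
  case False
  then show ?thesis by (simp add: qp_inv_neg)
qed

lemma power_mult_qpoch_Suc_diff:
  assumes "j \<le> N"
  shows "q ^ j * qpoch q (Suc N - j) = (q ^ j - q ^ Suc N) * qpoch q (N - j)"
proof -
  have "q ^ j * (1 - q ^ Suc (N - j)) = q ^ j - q ^ Suc N"
    using assms by (simp add: right_diff_distrib Suc_diff_le flip: power_add)
  then show ?thesis
    using assms by (simp add: Suc_diff_le qpoch_Suc)
qed

lemma power_square_add_mult:
  fixes q :: "'a::monoid_mult"
  shows "q ^ (j * j + r * j) = q ^ (j * (j - 1) + r * j) * q ^ j"
proof -
  have "j * j + r * j = j * (j - 1) + r * j + j" by (cases j) simp_all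
  then show ?thesis by (simp only: power_add)
qed

definition saalschuetz_term :: "complex \<Rightarrow> nat \<Rightarrow> nat \<Rightarrow> nat \<Rightarrow> nat \<Rightarrow> nat \<Rightarrow> complex" where
  "saalschuetz_term q u v p r j = q ^ (j * j + r * j) * qpoch q (u + v + p + r - j)
     * qp_inv q (int j) * qp_inv q (int p - int j) * qp_inv q (int u - int j)
     * qp_inv q (int v - int j) * qp_inv q (int r + int j)"

definition saalschuetz_cert :: "complex \<Rightarrow> nat \<Rightarrow> nat \<Rightarrow> nat \<Rightarrow> nat \<Rightarrow> nat \<Rightarrow> complex" where
  "saalschuetz_cert q u v p r j = q ^ (j * (j - 1) + r * j) * qpoch q (u + v + p + r + 1 - j)
     * qp_inv q (int j - 1) * qp_inv q (int p - int j) * qp_inv q (int u - int j)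
     * qp_inv q (int v + 1 - int j) * qp_inv q (int r + int j - 1)"

lemma saalschuetz_cert_0: "saalschuetz_cert q u v p r 0 = 0"
  by (simp add: saalschuetz_cert_def qp_inv_neg)

lemma saalschuetz_cert_beyond: "saalschuetz_cert q u v p r (Suc p) = 0"
  by (simp add: saalschuetz_cert_def qp_inv_neg)

definition saalschuetz_factor :: "complex \<Rightarrow> nat \<Rightarrow> nat \<Rightarrow> nat \<Rightarrow> nat \<Rightarrow> nat \<Rightarrow> complex" where
  "saalschuetz_factor q u v p r j = q ^ (j * (j - 1) + r * j) * qpoch q (u + v + p + r - j)
     * qp_inv q (int j) * qp_inv q (int p - int j) * qp_inv q (int u - int j)
     * qp_inv q (int (Suc v) - int j) * qp_inv q (int r + int j)"

lemma saalschuetz_term_Suc_factor: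
  assumes "j \<le> p"
  shows "saalschuetz_term q u (Suc v) p r j
    = saalschuetz_factor q u v p r j * (q ^ j - q ^ Suc (u + v + p + r))"
proof -
  have "u + Suc v + p + r - j = Suc (u + v + p + r) - j" by simp
  moreover have "q ^ j * qpoch q (Suc (u + v + p + r) - j)
      = (q ^ j - q ^ Suc (u + v + p + r)) * qpoch q (u + v + p + r - j)"
    using assms by (intro power_mult_qpoch_Suc_diff) simp
  ultimately show ?thesis
    unfolding saalschuetz_term_def saalschuetz_factor_def power_square_add_mult
    by (simp add: mult.assoc)
qed

lemma saalschuetz_term_factor:
  assumes "norm q < 1"
  shows "saalschuetz_term q u v p r j = saalschuetz_factor q u v p r j * (q ^ j - q ^ Suc v)"
  unfolding saalschuetz_term_def saalschuetz_factor_def power_square_add_mult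
  using power_mult_qp_inv_pred[OF assms, of j "Suc v"] by (simp add: mult.assoc)

lemma saalschuetz_cert_Suc_factor:
  assumes "norm q < 1"
  shows "q ^ j * saalschuetz_cert q u v p r (Suc j) = saalschuetz_factor q u v p r j * q ^ r
    * (q ^ j - q ^ p) * (q ^ j - q ^ u) * (q ^ j - q ^ Suc v)"
proof -
  have pow: "q ^ (Suc j * (Suc j - 1) + r * Suc j) = q ^ (j * (j - 1) + r * j) * (q ^ j * q ^ j * q ^ r)"
    by (cases j) (simp_all add: algebra_simps flip: power_add)
  have idx: "u + v + p + r + 1 - Suc j = u + v + p + r - j" by simp
  have "q ^ j * saalschuetz_cert q u v p r (Suc j)
      = q ^ (j * (j - 1) + r * j) * q ^ r * qpoch q (u + v + p + r - j) * qp_inv q (int j)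
        * qp_inv q (int r + int j) * (q ^ j * qp_inv q (int p - int (Suc j)))
        * (q ^ j * qp_inv q (int u - int (Suc j))) * (q ^ j * qp_inv q (int (Suc v) - int (Suc j)))"
    unfolding saalschuetz_cert_def pow idx by (simp add: ac_simps)
  then show ?thesis
    unfolding power_mult_qp_inv_pred[OF assms] saalschuetz_factor_def by (simp add: ac_simps)
qed

lemma saalschuetz_cert_factor:
  assumes "norm q < 1" and "j \<le> p"
  shows "q ^ j * saalschuetz_cert q u v p r j = saalschuetz_factor q u v p r j
    * (q ^ j - q ^ Suc (u + v + p + r)) * (1 - q ^ j) * (1 - q ^ r * q ^ j)"
proof -
  have idx: "u + v + p + r + 1 - j = Suc (u + v + p + r) - j" by simp
  have "q ^ j * saalschuetz_cert q u v p r j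
      = q ^ (j * (j - 1) + r * j) * qp_inv q (int p - int j) * qp_inv q (int u - int j)
        * qp_inv q (int (Suc v) - int j) * (q ^ j * qpoch q (Suc (u + v + p + r) - j))
        * qp_inv q (int j - 1) * qp_inv q (int (r + j) - 1)"
    unfolding saalschuetz_cert_def idx by (simp add: ac_simps)
  moreover have "j \<le> u + v + p + r" using assms(2) by simp
  ultimately show ?thesis
    unfolding power_mult_qpoch_Suc_diff[OF \<open>j \<le> u + v + p + r\<close>] qp_inv_pred[OF assms(1)]
      saalschuetz_factor_def
    by (simp add: power_add ac_simps)
qed

(* saalschuetz_term_recurrence after factoring out saalschuetz_factor, with x = q^j,
   y = q^(v+1), a = q^u, c = q^p and d = q^r *)
lemma saalschuetz_polynomial_identity:
  fixes a c d x y :: "'a::comm_ring_1"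
  shows "(1 - y) * (1 - y * d) * x * (x - a * c * d * y)
    = (1 - a * y * d) * (1 - c * y * d) * x * (x - y)
      - y * (d * (x - c) * (x - a) * (x - y) - (x - a * c * d * y) * (1 - x) * (1 - d * x))"
  by (simp add: algebra_simps)

lemma saalschuetz_term_recurrence:
  assumes q: "norm q < 1" "q \<noteq> 0" and "j \<le> p"
  shows "(1 - q ^ Suc v) * (1 - q ^ Suc (v + r)) * saalschuetz_term q u (Suc v) p r j
    = (1 - q ^ Suc (u + v + r)) * (1 - q ^ Suc (v + p + r)) * saalschuetz_term q u v p r j
      - q ^ Suc v * (saalschuetz_cert q u v p r (Suc j) - saalschuetz_cert q u v p r j)"
proof -
  define B where "B = saalschuetz_factor q u v p r j"
  define a c d x y where "a = q ^ u" and "c = q ^ p" and "d = q ^ r" and "x = q ^ j"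
    and "y = q ^ Suc v"
  have pows: "q ^ Suc (v + r) = y * d" "q ^ Suc (u + v + r) = a * y * d"
    "q ^ Suc (v + p + r) = c * y * d" "q ^ Suc (u + v + p + r) = a * c * d * y"
    by (simp_all add: a_def c_def d_def y_def power_add)
  have "x * ((1 - q ^ Suc v) * (1 - q ^ Suc (v + r)) * saalschuetz_term q u (Suc v) p r j)
      = B * ((1 - y) * (1 - y * d) * x * (x - a * c * d * y))"
    unfolding saalschuetz_term_Suc_factor[OF \<open>j \<le> p\<close>] pows B_def x_def y_def
    by (simp add: ac_simps)
  also have "\<dots> = B * ((1 - a * y * d) * (1 - c * y * d) * x * (x - y)
      - y * (d * (x - c) * (x - a) * (x - y) - (x - a * c * d * y) * (1 - x) * (1 - d * x)))"
    by (simp only: saalschuetz_polynomial_identity)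
  also have "\<dots> = (1 - a * y * d) * (1 - c * y * d) * saalschuetz_term q u v p r j * x
      - y * (x * saalschuetz_cert q u v p r (Suc j) - x * saalschuetz_cert q u v p r j)"
    unfolding x_def saalschuetz_term_factor[OF q(1)] saalschuetz_cert_Suc_factor[OF q(1)]
      saalschuetz_cert_factor[OF q(1) \<open>j \<le> p\<close>] pows(4)
    unfolding a_def c_def d_def y_def B_def by (simp add: algebra_simps)
  finally have "x * ((1 - q ^ Suc v) * (1 - q ^ Suc (v + r)) * saalschuetz_term q u (Suc v) p r j)
    = x * ((1 - q ^ Suc (u + v + r)) * (1 - q ^ Suc (v + p + r)) * saalschuetz_term q u v p r j
      - q ^ Suc v * (saalschuetz_cert q u v p r (Suc j) - saalschuetz_cert q u v p r j))"
    unfolding pows y_def by (simp add: algebra_simps)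
  moreover have "x \<noteq> 0" using q(2) by (simp add: x_def)
  ultimately show ?thesis by simp
qed

theorem q_saalschuetz:
  assumes q: "norm q < 1" "q \<noteq> 0"
  shows "(\<Sum>j=0..p. saalschuetz_term q u v p r j)
    = qpoch q (u + v + r) * qpoch q (u + p + r) * qpoch q (v + p + r)
      / (qpoch q p * qpoch q u * qpoch q v * qpoch q (p + r) * qpoch q (u + r) * qpoch q (v + r))"
    (is "?S v = ?R v")
proof (induction v)
  case 0
  have "?S 0 = (\<Sum>j\<in>{0}. saalschuetz_term q u 0 p r j)"
    by (rule sum.mono_neutral_right) (auto simp: saalschuetz_term_def qp_inv_neg)
  also have "\<dots> = qpoch q (u + p + r) / (qpoch q p * qpoch q u * qpoch q r)"
    by (simp add: saalschuetz_term_def qp_inv_def)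
  finally show ?case
    using qpoch_nonzero[OF q(1)] by (simp add: field_simps ac_simps)
next
  case (Suc v)
  define D where "D = (1 - q ^ Suc v) * (1 - q ^ Suc (v + r))"
  define E where "E = (1 - q ^ Suc (u + v + r)) * (1 - q ^ Suc (v + p + r))"
  have "D \<noteq> 0"
    using power_neq_one[OF q(1), of "Suc v"] power_neq_one[OF q(1), of "Suc (v + r)"]
    by (simp add: D_def)
  have "D * ?S (Suc v)
      = E * ?S v - q ^ Suc v * (\<Sum>j=0..p. saalschuetz_cert q u v p r (Suc j) - saalschuetz_cert q u v p r j)"
    unfolding D_def E_def sum_distrib_left sum_subtractf[symmetric] right_diff_distrib[symmetric]
    by (intro sum.cong refl saalschuetz_term_recurrence[OF q]) simp
  also have "(\<Sum>j=0..p. saalschuetz_cert q u v p r (Suc j) - saalschuetz_cert q u v p r j) = 0"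
    by (simp add: sum_Suc_diff saalschuetz_cert_0 saalschuetz_cert_beyond)
  finally have "?S (Suc v) = E / D * ?S v"
    using \<open>D \<noteq> 0\<close> by (simp add: field_simps)
  also have "\<dots> = E / D * ?R v"
    by (simp only: Suc.IH)
  also have "\<dots> = ?R (Suc v)"
  proof -
    have idx: "u + Suc v + r = Suc (u + v + r)" "Suc v + p + r = Suc (v + p + r)"
      "Suc v + r = Suc (v + r)" by simp_all
    show ?thesis
      unfolding idx qpoch_Suc D_def E_def
      using qpoch_nonzero[OF q(1)] \<open>D \<noteq> 0\<close> by (simp add: field_simps)
  qed
  finally show ?case .
qed

definition series_term :: "complex \<Rightarrow> nat \<Rightarrow> nat \<Rightarrow> nat \<Rightarrow> nat \<Rightarrow> nat \<Rightarrow> nat \<Rightarrow> nat \<Rightarrow> complex" where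
  "series_term q s l m n u v k = q ^ (k\<^sup>2 + s * k) * qp q (int (l + m + n) - int k + int s)
     * qp q (int (u + v + k + s)) * qp_inv q (int k) * qp_inv q (int l - int k)
     * qp_inv q (int m - int k) * qp_inv q (int n - int k) * qp_inv q (int (u + k + s))
     * qp_inv q (int (v + k + s))"

(* s = 0 gives the first identity of the theorem, s = 1 the second *)
definition qseries :: "complex \<Rightarrow> nat \<Rightarrow> nat \<Rightarrow> nat \<Rightarrow> nat \<Rightarrow> nat \<Rightarrow> nat \<Rightarrow> complex" where
  "qseries q s l m n u v = qp_inv q (int (l + m + s)) * qp_inv q (int (l + n + s))
     * qp_inv q (int u) * qp_inv q (int v) * (\<Sum>k. series_term q s l m n u v k)"

definition double_term :: "complex \<Rightarrow> nat \<Rightarrow> nat \<Rightarrow> nat \<Rightarrow> nat \<Rightarrow> nat \<Rightarrow> nat \<Rightarrow> nat \<Rightarrow> nat \<Rightarrow> complex" where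
  "double_term q s l m n u v k j = q ^ (k * k + s * k + (j * j + s * j) + k * j)
     * qpoch q (l + m + n + s - k) * qpoch q (u + v + l + s - j)
     * qp_inv q (int k) * qp_inv q (int m - int k) * qp_inv q (int n - int k)
     * qp_inv q (int j) * qp_inv q (int u - int j) * qp_inv q (int v - int j)
     * qp_inv q (int l - (int k + int j)) * qp_inv q (int (s + k + j))"

lemma double_term_swap: "double_term q s l m n u v k j = double_term q s l u v m n j k"
  unfolding double_term_def by (simp add: ac_simps)

lemma double_term_eq_saalschuetz_term:
  assumes "k \<le> l"
  shows "double_term q s l m n u v k j = q ^ (k\<^sup>2 + s * k) * qpoch q (l + m + n + s - k)
    * qp_inv q (int k) * qp_inv q (int m - int k) * qp_inv q (int n - int k)
    * saalschuetz_term q u v (l - k) (s + k) j"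
proof -
  have idx: "u + v + (l - k) + (s + k) - j = u + v + l + s - j"
    "int (l - k) - int j = int l - (int k + int j)" using assms by simp_all
  have pow: "q ^ (k * k + s * k + (j * j + s * j) + k * j)
      = q ^ (k\<^sup>2 + s * k) * q ^ (j * j + (s + k) * j)"
    by (simp add: power2_eq_square algebra_simps flip: power_add)
  show ?thesis
    unfolding double_term_def saalschuetz_term_def idx pow by (simp add: ac_simps)
qed

lemma series_term_expand:
  assumes q: "norm q < 1" "q \<noteq> 0" and "k \<le> l"
  shows "qp_inv q (int u) * qp_inv q (int v) * series_term q s l m n u v k
    = qpoch q (l + s) * qp_inv q (int (u + l + s)) * qp_inv q (int (v + l + s))
      * (\<Sum>j=0..l. double_term q s l m n u v k j)"
proof -
  define K where "K = q ^ (k\<^sup>2 + s * k) * qpoch q (l + m + n + s - k) * qp_inv q (int k)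
    * qp_inv q (int m - int k) * qp_inv q (int n - int k)"
  have "(\<Sum>j=0..l. double_term q s l m n u v k j)
      = K * (\<Sum>j=0..l. saalschuetz_term q u v (l - k) (s + k) j)"
    unfolding double_term_eq_saalschuetz_term[OF \<open>k \<le> l\<close>] K_def by (simp add: sum_distrib_left)
  also have "(\<Sum>j=0..l. saalschuetz_term q u v (l - k) (s + k) j)
      = (\<Sum>j=0..l-k. saalschuetz_term q u v (l - k) (s + k) j)"
    by (rule sum.mono_neutral_right) (auto simp: saalschuetz_term_def qp_inv_neg)
  also have "\<dots> = qpoch q (u + v + (s + k)) * qpoch q (u + l + s) * qpoch q (v + l + s)
      / (qpoch q (l - k) * qpoch q u * qpoch q v * qpoch q (l + s) * qpoch q (u + (s + k))
        * qpoch q (v + (s + k)))"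
    using q_saalschuetz[OF q, of u v "l - k" "s + k"] \<open>k \<le> l\<close> by (simp add: ac_simps)
  finally have double_sum: "(\<Sum>j=0..l. double_term q s l m n u v k j) = K * \<dots>" .
  have idx: "int (l + m + n) - int k + int s = int (l + m + n + s - k)" "int l - int k = int (l - k)"
    using \<open>k \<le> l\<close> by simp_all
  show ?thesis
    unfolding double_sum K_def series_term_def idx qp_of_nat qp_inv_of_nat
    using qpoch_nonzero[OF q(1)] by (simp add: field_simps)
qed

lemma qseries_eq_double_sum:
  assumes q: "norm q < 1" "q \<noteq> 0"
  shows "qseries q s l m n u v = qp_inv q (int (l + m + s)) * qp_inv q (int (l + n + s))
    * qpoch q (l + s) * qp_inv q (int (u + l + s)) * qp_inv q (int (v + l + s))
    * (\<Sum>k=0..l. \<Sum>j=0..l. double_term q s l m n u v k j)"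
proof -
  have "(\<Sum>k. series_term q s l m n u v k) = (\<Sum>k=0..l. series_term q s l m n u v k)"
    by (rule suminf_finite) (auto simp: series_term_def qp_inv_neg)
  then have "qp_inv q (int u) * qp_inv q (int v) * (\<Sum>k. series_term q s l m n u v k)
      = (\<Sum>k=0..l. qp_inv q (int u) * qp_inv q (int v) * series_term q s l m n u v k)"
    by (simp only: sum_distrib_left)
  also have "\<dots> = (\<Sum>k=0..l. qpoch q (l + s) * qp_inv q (int (u + l + s)) * qp_inv q (int (v + l + s))
      * (\<Sum>j=0..l. double_term q s l m n u v k j))"
    by (intro sum.cong refl series_term_expand[OF q]) simp
  also have "\<dots> = qpoch q (l + s) * qp_inv q (int (u + l + s)) * qp_inv q (int (v + l + s))
      * (\<Sum>k=0..l. \<Sum>j=0..l. double_term q s l m n u v k j)"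
    by (simp only: sum_distrib_left)
  finally show ?thesis
    unfolding qseries_def by (simp only: mult.assoc)
qed

lemma qseries_swap:
  assumes "norm q < 1" "q \<noteq> 0"
  shows "qseries q s l m n u v = qseries q s l u v m n"
proof -
  have "(\<Sum>k=0..l. \<Sum>j=0..l. double_term q s l m n u v k j)
      = (\<Sum>j=0..l. \<Sum>k=0..l. double_term q s l u v m n j k)"
    by (subst sum.swap) (simp only: double_term_swap[of q s l m n u v])
  then show ?thesis
    unfolding qseries_eq_double_sum[OF assms] by (simp add: ac_simps)
qed

theorem corollary5p7:
  fixes q :: complex and l m n u v :: nat
  assumes "0 < norm q" and "norm q < 1"
  shows "qp_inv q (int (l+m)) * qp_inv q (int (l+n)) * qp_inv q (int u) * qp_inv q (int v) *
           (\<Sum>k. q ^ (k^2) * qp q (int (l+m+n) - int k) * qp q (int (u+v+k)) *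
              qp_inv q (int k) * qp_inv q (int l - int k) * qp_inv q (int m - int k) *
              qp_inv q (int n - int k) * qp_inv q (int (u+k)) * qp_inv q (int (v+k)))
       = qp_inv q (int (l+u)) * qp_inv q (int (l+v)) * qp_inv q (int m) * qp_inv q (int n) *
           (\<Sum>k. q ^ (k^2) * qp q (int (l+u+v) - int k) * qp q (int (m+n+k)) *
              qp_inv q (int k) * qp_inv q (int l - int k) * qp_inv q (int u - int k) *
              qp_inv q (int v - int k) * qp_inv q (int (m+k)) * qp_inv q (int (n+k)))
     \<and> qp_inv q (int (l+m+1)) * qp_inv q (int (l+n+1)) * qp_inv q (int u) * qp_inv q (int v) *
           (\<Sum>k. q ^ (k^2+k) * qp q (int (l+m+n) - int k + 1) * qp q (int (u+v+k+1)) *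
              qp_inv q (int k) * qp_inv q (int l - int k) * qp_inv q (int m - int k) *
              qp_inv q (int n - int k) * qp_inv q (int (u+k+1)) * qp_inv q (int (v+k+1)))
       = qp_inv q (int (l+u+1)) * qp_inv q (int (l+v+1)) * qp_inv q (int m) * qp_inv q (int n) *
           (\<Sum>k. q ^ (k^2+k) * qp q (int (l+u+v) - int k + 1) * qp q (int (m+n+k+1)) *
              qp_inv q (int k) * qp_inv q (int l - int k) * qp_inv q (int u - int k) *
              qp_inv q (int v - int k) * qp_inv q (int (m+k+1)) * qp_inv q (int (n+k+1)))"
proof -
  have "q \<noteq> 0" using assms(1) by auto
  then have "qseries q s l m n u v = qseries q s l u v m n" for s
    using qseries_swap assms(2) by blast
  from this[of 0] this[of 1] show ?thesis
    unfolding qseries_def series_term_def by simp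
qed

end
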